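(* Let $n>1$ and let $s=(x_1,\dots,x_n)\in\mathbb{T}_n$ be a unit (i.e. $x_1\neq0$). Writing $(s^{-1})_p$ for the $p$-th component of $s^{-1}$ in $n$-vector format, for every $k\le n$ and every $j<k$, $$\frac{\partial (s^{-1})_k}{\partial x_j}=\frac{\partial (s^{-1})_{k-j+1}}{\partial x_1}.$$
   Context: $\mathbb{T}_n$ is the $n$-dimensional real algebra of upper triangular Toeplitz $n\times n$ matrices under matrix multiplication. An element $s=(x_1,\dots,x_n)\in\mathbb{T}_n$ denotes the upper triangular Toeplitz matrix whose entries on the successive diagonals, starting with the main diagonal and proceeding to the right, are $x_1,\dots,x_n$; equivalently $s=x_1\mathbf{1}+x_2\mathbf{z}+\dots+x_n\mathbf{z}^{n-1}$ where $\mathbf{z}$ has ones on the superdiagonal and zeros elsewhere. The inverse $s^{-1}$ is again in $\mathbb{T}_n$ and is written in the same vector format. *)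

theory Defs
  imports Complex_Main
begin

text \<open>An element s = (x_1,...,x_n) of T_n is represented by a function x :: nat => real,
  of which only the values x 1, ..., x n matter (1-based indexing as in the paper).\<close>

definition toep :: "(nat \<Rightarrow> real) \<Rightarrow> nat \<Rightarrow> nat \<Rightarrow> real" where
  "toep x i j = (if i \<le> j then x (j - i + 1) else 0)"

definition tinv :: "nat \<Rightarrow> (nat \<Rightarrow> real) \<Rightarrow> nat \<Rightarrow> real" where
  "tinv n x = (THE y. (\<forall>p. p \<notin> {1..n} \<longrightarrow> y p = 0) \<and>
      (\<forall>i\<in>{1..n}. \<forall>j\<in>{1..n}.
         (\<Sum>l=1..n. toep x i l * toep y l j) = (if i = j then 1 else 0)))"

end

theory Submission
  imports Defs "HOL-Computational_Algebra.Formal_Power_Series"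
begin

text \<open>Identify \<open>T\<^sub>n\<close> with power series in \<open>z\<close> modulo \<open>z^n\<close>: the components of \<open>s\<^sup>-\<^sup>1\<close>
  are the first \<open>n\<close> coefficients of the power series inverse of
  \<open>A = x\<^sub>1 + x\<^sub>2 z + \<dots> + x\<^sub>n z^(n-1)\<close>. Replacing \<open>x\<^sub>j\<close> by \<open>t\<close> adds \<open>(t - x\<^sub>j) z^(j-1)\<close> to \<open>A\<close>,
  and \<open>B\<^sup>-\<^sup>1 - A\<^sup>-\<^sup>1 = B\<^sup>-\<^sup>1 (A - B) A\<^sup>-\<^sup>1\<close> shows that the derivative of \<open>A\<^sup>-\<^sup>1\<close> in \<open>x\<^sub>j\<close> is
  \<open>-A\<^sup>-\<^sup>2 z^(j-1)\<close>. Its coefficient of \<open>z^(k-1)\<close> is the coefficient of \<open>z^(k-j)\<close> in \<open>-A\<^sup>-\<^sup>2\<close>,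
  which is the derivative in \<open>x\<^sub>1\<close> of the coefficient of \<open>z^(k-j)\<close> in \<open>A\<^sup>-\<^sup>1\<close>.\<close>

definition toep_fps :: "nat \<Rightarrow> (nat \<Rightarrow> real) \<Rightarrow> real fps" where
  "toep_fps n x = Abs_fps (\<lambda>i. if i < n then x (i + 1) else 0)"

lemma fps_mult_nth_cong:
  assumes "\<And>i. i \<le> m \<Longrightarrow> fps_nth g i = fps_nth h i"
  shows "fps_nth (f * g) m = fps_nth (f * h) m"
  unfolding fps_mult_nth using assms by (intro sum.cong) auto

lemma toep_mult_eq_fps_mult_nth:
  assumes "i \<in> {1..n}" "j \<in> {1..n}"
  shows "(\<Sum>l=1..n. toep x i l * toep y l j) =
    (if i \<le> j then fps_nth (toep_fps n x * toep_fps n y) (j - i) else 0)"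
proof (cases "i \<le> j")
  case False
  then show ?thesis by (auto simp: toep_def intro!: sum.neutral)
next
  case True
  have "(\<Sum>l=1..n. toep x i l * toep y l j) = (\<Sum>l\<in>{i..j}. x (l - i + 1) * y (j - l + 1))"
    using assms by (intro sum.mono_neutral_cong_right) (auto simp: toep_def)
  also have "\<dots> = (\<Sum>q=0..j - i. x (q + 1) * y (j - i - q + 1))"
    using True sum.shift_bounds_cl_nat_ivl[of "\<lambda>l. x (l - i + 1) * y (j - l + 1)" 0 i "j - i"]
    by (simp add: add.commute)
  also have "\<dots> = fps_nth (toep_fps n x * toep_fps n y) (j - i)"
    unfolding fps_mult_nth toep_fps_def using assms True by (intro sum.cong) auto
  finally show ?thesis using True by simp
qed

lemma tinv_eq_fps_inverse_nth:
  assumes "x 1 \<noteq> 0" and "p \<in> {1..n}"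
  shows "tinv n x p = fps_nth (inverse (toep_fps n x)) (p - 1)"
proof -
  define A where "A = toep_fps n x"
  define y where "y = (\<lambda>p. if p \<in> {1..n} then fps_nth (inverse A) (p - 1) else 0)"
  let ?is_inv = "\<lambda>y. (\<forall>p. p \<notin> {1..n} \<longrightarrow> y p = 0) \<and>
      (\<forall>i\<in>{1..n}. \<forall>j\<in>{1..n}.
         (\<Sum>l=1..n. toep x i l * toep y l j) = (if i = j then 1 else 0))"
  have A0: "fps_nth A 0 \<noteq> 0"
    using assms by (auto simp: A_def toep_fps_def)
  have "?is_inv y"
  proof (intro conjI ballI allI impI)
    fix p assume "p \<notin> {1..n}"
    then show "y p = 0" by (auto simp: y_def)
  next
    fix i j assume ij: "i \<in> {1..n}" "j \<in> {1..n}"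
    have "fps_nth (A * toep_fps n y) (j - i) = fps_nth (A * inverse A) (j - i)"
      using ij by (intro fps_mult_nth_cong) (auto simp: toep_fps_def y_def)
    then show "(\<Sum>l=1..n. toep x i l * toep y l j) = (if i = j then 1 else 0)"
      using ij A0 by (subst toep_mult_eq_fps_mult_nth[OF ij]) (auto simp: inverse_mult_eq_1' A_def)
  qed
  moreover have "y' = y" if "?is_inv y'" for y'
  proof
    fix p
    show "y' p = y p"
    proof (cases "p \<in> {1..n}")
      case False
      then show ?thesis using that by (auto simp: y_def)
    next
      case True
      have unit: "fps_nth (A * toep_fps n y') r = (if r = 0 then 1 else 0)" if "r < n" for r
        using \<open>?is_inv y'\<close> that toep_mult_eq_fps_mult_nth[of 1 n "r + 1" x y'] by (auto simp: A_def)
      have "fps_nth (toep_fps n y') (p - 1) = fps_nth (inverse A * (A * toep_fps n y')) (p - 1)"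
        using A0 by (simp add: inverse_mult_eq_1 flip: mult.assoc)
      also have "\<dots> = fps_nth (inverse A * 1) (p - 1)"
        using True unit by (intro fps_mult_nth_cong) (auto simp del: fps_mult_nth_0)
      finally show ?thesis
        using True by (cases p) (auto simp: y_def toep_fps_def)
    qed
  qed
  ultimately have "tinv n x = y"
    unfolding tinv_def by (intro the_equality) blast+
  then show ?thesis
    using assms by (simp add: y_def A_def)
qed

lemma isCont_fps_inverse_nth:
  fixes F :: "'b::t2_space \<Rightarrow> 'a::real_normed_field fps"
  assumes cont: "\<And>i. isCont (\<lambda>t. fps_nth (F t) i) a" and F0: "fps_nth (F a) 0 \<noteq> 0"
  shows "isCont (\<lambda>t. fps_nth (inverse (F t)) m) a"
proof (induction m rule: less_induct)
  case (less m)
  show ?case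
  proof (cases m)
    case 0
    then show ?thesis
      using F0 by (simp add: cont continuous_intros)
  next
    case (Suc m')
    have "(\<lambda>t. fps_nth (inverse (F t)) m) =
      (\<lambda>t. - inverse (fps_nth (F t) 0) * (\<Sum>i=1..m. fps_nth (F t) i * fps_nth (inverse (F t)) (m - i)))"
      by (simp add: fps_inverse_def Suc)
    moreover have "isCont (\<lambda>t. fps_nth (inverse (F t)) (m - i)) a" if "i \<in> {1..m}" for i
      using that by (intro less) auto
    ultimately show ?thesis
      using F0 by (auto intro!: continuous_intros cont)
  qed
qed

lemma has_field_derivative_fps_inverse_nth:
  fixes A P :: "'a::real_normed_field fps"
  assumes A0: "fps_nth A 0 \<noteq> 0"
  shows "((\<lambda>t. fps_nth (inverse (A + fps_const (t - a) * P)) m)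
          has_field_derivative - fps_nth (inverse A * inverse A * P) m) (at a)"
proof -
  define B where "B = (\<lambda>t. inverse (A + fps_const (t - a) * P))"
  define g where "g = (\<lambda>t. - fps_nth (B t * P * inverse A) m)"
  define S where "S = {t. fps_nth A 0 + (t - a) * fps_nth P 0 \<noteq> 0}"
  have difference: "fps_nth (inverse A) m + g t * (t - a) = fps_nth (B t) m" if "t \<in> S" for t
  proof -
    have "B t * (A + fps_const (t - a) * P) = 1"
      unfolding B_def using that by (intro inverse_mult_eq_1) (simp add: S_def)
    moreover have "A * inverse A = 1"
      using A0 by (rule inverse_mult_eq_1')
    ultimately have "B t - inverse A =
        B t * (A * inverse A) - B t * (A + fps_const (t - a) * P) * inverse A"
      by simp
    also have "\<dots> = fps_const (a - t) * (B t * P * inverse A)"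
      by (simp add: algebra_simps flip: fps_const_sub)
    finally have "fps_nth (B t - inverse A) m = fps_nth (fps_const (a - t) * (B t * P * inverse A)) m"
      by (simp only:)
    then have "fps_nth (B t) m - fps_nth (inverse A) m = (a - t) * fps_nth (B t * P * inverse A) m"
      by simp
    then show ?thesis
      by (simp add: g_def algebra_simps)
  qed
  have "isCont g a"
    unfolding g_def fps_mult_nth B_def
    by (intro continuous_intros isCont_fps_inverse_nth) (simp_all add: A0)
  then have "((\<lambda>t. fps_nth (inverse A) m + g t * (t - a)) has_field_derivative g a) (at a)"
    by (subst CARAT_DERIV) auto
  moreover have "open S"
    unfolding S_def by (intro open_Collect_neq continuous_intros)
  moreover have "a \<in> S"
    using A0 by (simp add: S_def)
  ultimately have "((\<lambda>t. fps_nth (B t) m) has_field_derivative g a) (at a)"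
    by (rule has_field_derivative_transform_within_open) (rule difference)
  then show ?thesis
    by (simp add: B_def g_def mult_ac)
qed

lemma toep_fps_fun_upd:
  assumes "1 \<le> j" "j \<le> n"
  shows "toep_fps n (x(j := t)) = toep_fps n x + fps_const (t - x j) * fps_X ^ (j - 1)"
  using assms by (intro fps_ext) (auto simp: toep_fps_def)

lemma has_real_derivative_tinv:
  assumes "x 1 \<noteq> 0" and "1 \<le> j" "j \<le> n" and "1 \<le> k" "k \<le> n"
  shows "((\<lambda>t. tinv n (x(j := t)) k) has_real_derivative
          - fps_nth (inverse (toep_fps n x) * inverse (toep_fps n x) * fps_X ^ (j - 1)) (k - 1)) (at (x j))"
proof (rule has_field_derivative_transform_within_open)
  \<comment> \<open>Outside this set \<open>tinv\<close> is an unspecified \<open>THE\<close> value.\<close>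
  let ?S = "{t. (x(j := t)) 1 \<noteq> 0}"
  show "open ?S"
    by (cases "j = 1") (auto simp: open_Collect_neq)
  show "x j \<in> ?S"
    using assms by auto
  show "fps_nth (inverse (toep_fps n x + fps_const (t - x j) * fps_X ^ (j - 1))) (k - 1) =
      tinv n (x(j := t)) k" if "t \<in> ?S" for t
    using assms that by (simp add: tinv_eq_fps_inverse_nth toep_fps_fun_upd)
  show "((\<lambda>t. fps_nth (inverse (toep_fps n x + fps_const (t - x j) * fps_X ^ (j - 1))) (k - 1))
      has_real_derivative
        - fps_nth (inverse (toep_fps n x) * inverse (toep_fps n x) * fps_X ^ (j - 1)) (k - 1)) (at (x j))"
    using assms by (intro has_field_derivative_fps_inverse_nth) (simp add: toep_fps_def)
qed

theorem lemma10p3: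
  fixes n :: nat and x :: "nat \<Rightarrow> real" and j k :: nat
  assumes "n > 1" and "x 1 \<noteq> 0"
    and "k \<le> n" and "1 \<le> j" and "j < k"
  shows "\<exists>D. ((\<lambda>t. tinv n (x(j := t)) k) has_real_derivative D) (at (x j)) \<and>
             ((\<lambda>t. tinv n (x(1 := t)) (k - j + 1)) has_real_derivative D) (at (x 1))"
proof -
  define G where "G = inverse (toep_fps n x)"
  have "((\<lambda>t. tinv n (x(j := t)) k) has_real_derivative - fps_nth (G * G * fps_X ^ (j - 1)) (k - 1))
      (at (x j))"
    unfolding G_def using assms by (intro has_real_derivative_tinv) auto
  moreover have "((\<lambda>t. tinv n (x(1 := t)) (k - j + 1)) has_real_derivative - fps_nth (G * G) (k - j))
      (at (x 1))"
    using has_real_derivative_tinv[of x 1 n "k - j + 1"] assms by (simp add: G_def)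
  moreover have "fps_nth (G * G * fps_X ^ (j - 1)) (k - 1) = fps_nth (G * G) (k - j)"
    using assms by (simp add: fps_X_power_mult_right_nth)
  ultimately show ?thesis
    by metis
qed

end
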